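(* Let $(\mathfrak D,d)$ be a finite metric space, $p\in(1,\infty)$, $\vartheta\in\mathcal P(\mathfrak D)$, and let $\{\mu_k\}_{k\in\mathbb{N}}$ be a countable dense subset of $(\mathcal P(\mathfrak D),W_p)$. For each $k$ let $(\varphi_k,\psi_k)$ be functions $\mathfrak D\to\mathbb{R}$ with $\psi_k=\varphi_k^c$, $\varphi_k=\psi_k^c$ and $W_p^p(\vartheta,\mu_k)=\int_{\mathfrak D}\varphi_k\,d\mu_k+\int_{\mathfrak D}\psi_k\,d\vartheta$. For finite $I\subset\mathbb{N}$ define $G_I(\mu):=\max_{k\in I}\big(\int\varphi_k\,d\mu+\int\psi_k\,d\vartheta\big)$ and $F(\mu):=W_p^p(\vartheta,\mu)$ for $\mu\in\mathcal P(\mathfrak D)$. Then for every $\varepsilon>0$ there exists a finite $I_\varepsilon\subset\mathbb{N}$ with \[\sup_{\mu\in\mathcal P(\mathfrak D)}|F(\mu)-G_{I_\varepsilon}(\mu)|\le\varepsilon.\]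
   Context: $\mathcal P(\mathfrak D)$ is the set of probability measures on $\mathfrak D$, $W_p$ the $p$-Wasserstein distance with cost $d(x,y)^p$. The $c$-transform is $\varphi^c(x):=\inf_{y\in\mathfrak D}\big(d(x,y)^p-\varphi(y)\big)$. *)

theory Defs
  imports "HOL-Probability.Probability"
begin

text \<open>The finite metric space is modelled as a type of class finite metric_space;
probability measures on it are pmfs; integrals are pmf expectations.\<close>

definition couplings :: "'a pmf \<Rightarrow> 'b pmf \<Rightarrow> ('a \<times> 'b) pmf set" where
  "couplings \<mu> \<nu> = {\<pi>. map_pmf fst \<pi> = \<mu> \<and> map_pmf snd \<pi> = \<nu>}"

definition Wpp :: "real \<Rightarrow> 'a::metric_space pmf \<Rightarrow> 'a pmf \<Rightarrow> real" where
  "Wpp p \<mu> \<nu> = (INF \<pi>\<in>couplings \<mu> \<nu>.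
      measure_pmf.expectation \<pi> (\<lambda>(x,y). dist x y powr p))"

definition Wp :: "real \<Rightarrow> 'a::metric_space pmf \<Rightarrow> 'a pmf \<Rightarrow> real" where
  "Wp p \<mu> \<nu> = Wpp p \<mu> \<nu> powr (1 / p)"

definition c_transform :: "real \<Rightarrow> ('a::{metric_space,finite} \<Rightarrow> real) \<Rightarrow> 'a \<Rightarrow> real" where
  "c_transform p \<phi> x = (INF y. dist x y powr p - \<phi> y)"

end

theory Submission
  imports Defs "HOL-Analysis.Analysis"
begin

text \<open>Weak duality gives \<open>G\<^sub>I \<le> F\<close> for every \<open>I\<close>. Conversely, let \<open>D\<close> be the largest
cost \<open>d(x,y)^p\<close>. Both \<open>F\<close> and the affine map \<open>\<mu> \<mapsto> \<integral>\<phi>\<^sub>k d\<mu> + \<integral>\<psi>\<^sub>k d\<vartheta>\<close> are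
\<open>D\<close>-Lipschitz for the \<open>\<ell>\<^sup>1\<close> distance of probability vectors: the first by re-routing the
surplus mass of an almost optimal coupling, the second because a \<open>c\<close>-transform oscillates by at
most \<open>D\<close>. The two maps agree at \<open>\<mu>\<^sub>k\<close>, so \<open>F \<le> G\<^sub>I + 2D\<eta>\<close> as soon as every \<open>\<mu>\<close> is
\<open>\<eta>\<close>-close in \<open>\<ell>\<^sup>1\<close> to some \<open>\<mu>\<^sub>k\<close> with \<open>k \<in> I\<close>. On a finite space \<open>W\<^sub>p\<close>-density
implies \<open>\<ell>\<^sup>1\<close>-density, because off-diagonal costs are bounded below, and the probability
simplex is compact, so finitely many \<open>\<mu>\<^sub>k\<close> suffice.\<close>

lemma expectation_finite:
  fixes M :: "'a::finite pmf"
  shows "measure_pmf.expectation M f = (\<Sum>x\<in>UNIV. pmf M x * f x)"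
  by (subst integral_measure_pmf_real[where A=UNIV]) (auto simp: mult.commute)

lemma pmf_map_fst_finite:
  fixes \<pi> :: "('a::finite \<times> 'b::finite) pmf"
  shows "pmf (map_pmf fst \<pi>) x = (\<Sum>y\<in>UNIV. pmf \<pi> (x, y))"
proof -
  have preimage: "fst -` {x} = Pair x ` UNIV" by auto
  show ?thesis
    unfolding pmf_map measure_measure_pmf_finite[OF finite] preimage by (simp add: sum.reindex inj_on_def)
qed

lemma pmf_map_snd_finite:
  fixes \<pi> :: "('a::finite \<times> 'b::finite) pmf"
  shows "pmf (map_pmf snd \<pi>) y = (\<Sum>x\<in>UNIV. pmf \<pi> (x, y))"
proof -
  have preimage: "snd -` {y} = (\<lambda>x. (x, y)) ` UNIV" by auto
  show ?thesis
    unfolding pmf_map measure_measure_pmf_finite[OF finite] preimage by (simp add: sum.reindex inj_on_def)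
qed

lemma couplings_marginals:
  fixes \<pi> :: "('a::finite \<times> 'b::finite) pmf"
  assumes "\<pi> \<in> couplings \<mu> \<nu>"
  shows "pmf \<mu> x = (\<Sum>y\<in>UNIV. pmf \<pi> (x, y))" and "pmf \<nu> y = (\<Sum>x\<in>UNIV. pmf \<pi> (x, y))"
  using assms by (auto simp: couplings_def pmf_map_fst_finite pmf_map_snd_finite)

lemma pair_pmf_in_couplings: "pair_pmf \<mu> \<nu> \<in> couplings \<mu> \<nu>"
  by (simp add: couplings_def map_fst_pair_pmf map_snd_pair_pmf)

lemma coupling_of_marginal_sums:
  fixes \<sigma> :: "'a::finite \<times> 'b::finite \<Rightarrow> real"
  assumes nonneg: "\<And>z. 0 \<le> \<sigma> z"
    and row: "\<And>x. (\<Sum>y\<in>UNIV. \<sigma> (x, y)) = pmf \<mu> x"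
    and col: "\<And>y. (\<Sum>x\<in>UNIV. \<sigma> (x, y)) = pmf \<nu> y"
  obtains \<pi> where "\<pi> \<in> couplings \<mu> \<nu>" and "pmf \<pi> = \<sigma>"
proof
  have "(\<Sum>z\<in>UNIV. \<sigma> z) = (\<Sum>x\<in>UNIV. \<Sum>y\<in>UNIV. \<sigma> (x, y))"
    by (simp add: sum.cartesian_product split_def)
  then have "(\<integral>\<^sup>+z. ennreal (\<sigma> z) \<partial>count_space UNIV) = 1"
    by (simp add: nn_integral_count_space_finite nonneg row sum_pmf_eq_1)
  with nonneg show pmf_eq: "pmf (embed_pmf \<sigma>) = \<sigma>"
    by (intro ext pmf_embed_pmf) auto
  show "embed_pmf \<sigma> \<in> couplings \<mu> \<nu>"
    unfolding couplings_def
    by (auto intro!: pmf_eqI simp: pmf_map_fst_finite pmf_map_snd_finite pmf_eq row col)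
qed

definition transport_cost :: "real \<Rightarrow> ('a::metric_space \<times> 'a) pmf \<Rightarrow> real" where
  "transport_cost p \<pi> = measure_pmf.expectation \<pi> (\<lambda>(x, y). dist x y powr p)"

lemma transport_cost_nonneg: "0 \<le> transport_cost p \<pi>"
  unfolding transport_cost_def by (rule integral_nonneg_AE) auto

lemma transport_cost_finite:
  fixes \<pi> :: "('a::{metric_space,finite} \<times> 'a) pmf"
  shows "transport_cost p \<pi> = (\<Sum>x\<in>UNIV. \<Sum>y\<in>UNIV. pmf \<pi> (x, y) * dist x y powr p)"
  by (simp add: transport_cost_def expectation_finite sum.cartesian_product split_def)

lemma Wpp_le_transport_cost: "\<pi> \<in> couplings \<mu> \<nu> \<Longrightarrow> Wpp p \<mu> \<nu> \<le> transport_cost p \<pi>"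
  unfolding Wpp_def transport_cost_def[symmetric]
  by (rule cINF_lower) (auto intro: bdd_belowI[where m=0] simp: transport_cost_nonneg)

lemma le_WppI:
  "(\<And>\<pi>. \<pi> \<in> couplings \<mu> \<nu> \<Longrightarrow> c \<le> transport_cost p \<pi>) \<Longrightarrow> c \<le> Wpp p \<mu> \<nu>"
  unfolding Wpp_def transport_cost_def[symmetric]
  by (rule cINF_greatest) (use pair_pmf_in_couplings in auto)

lemma Wpp_near_optimal_coupling:
  assumes "\<eta> > 0"
  obtains \<pi> where "\<pi> \<in> couplings \<mu> \<nu>" and "transport_cost p \<pi> < Wpp p \<mu> \<nu> + \<eta>"
proof (rule ccontr)
  assume "\<not> thesis"
  with that have "Wpp p \<mu> \<nu> + \<eta> \<le> Wpp p \<mu> \<nu>"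
    by (intro le_WppI) (meson not_le)
  with assms show False by simp
qed

lemma Wpp_le_plan:
  fixes \<sigma> :: "'a::{metric_space,finite} \<times> 'a \<Rightarrow> real"
  assumes "\<And>z. 0 \<le> \<sigma> z"
    and "\<And>x. (\<Sum>y\<in>UNIV. \<sigma> (x, y)) = pmf \<mu> x"
    and "\<And>y. (\<Sum>x\<in>UNIV. \<sigma> (x, y)) = pmf \<nu> y"
  shows "Wpp p \<mu> \<nu> \<le> (\<Sum>x\<in>UNIV. \<Sum>y\<in>UNIV. \<sigma> (x, y) * dist x y powr p)"
proof -
  obtain \<pi> where "\<pi> \<in> couplings \<mu> \<nu>" and "pmf \<pi> = \<sigma>"
    using coupling_of_marginal_sums assms by metis
  then show ?thesis
    using Wpp_le_transport_cost[of \<pi> \<mu> \<nu> p] unfolding transport_cost_finite by simp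
qed

lemma c_transform_le: "c_transform p \<phi> x \<le> dist x y powr p - \<phi> y"
  unfolding c_transform_def by (rule cINF_lower) (simp_all add: bdd_below_finite)

lemma c_transform_oscillation:
  fixes \<psi> :: "'a::{metric_space,finite} \<Rightarrow> real"
  assumes "\<And>x y::'a. dist x y powr p \<le> D"
  shows "c_transform p \<psi> x \<le> c_transform p \<psi> x' + D"
proof -
  have "c_transform p \<psi> x - D \<le> dist x' y powr p - \<psi> y" for y
    using c_transform_le[of p \<psi> x y] assms[of x y] powr_ge_zero[of "dist x' y" p] by linarith
  then have "c_transform p \<psi> x - D \<le> c_transform p \<psi> x'"
    unfolding c_transform_def[of p \<psi> x'] by (intro cINF_greatest) auto
  then show ?thesis by simp
qed

lemma dual_le_Wpp:
  fixes \<theta> \<mu> :: "'a::{metric_space,finite} pmf"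
  assumes "\<psi> = c_transform p \<phi>"
  shows "measure_pmf.expectation \<mu> \<phi> + measure_pmf.expectation \<theta> \<psi> \<le> Wpp p \<theta> \<mu>"
proof (rule le_WppI)
  fix \<pi> assume \<pi>: "\<pi> \<in> couplings \<theta> \<mu>"
  have "measure_pmf.expectation \<theta> \<psi> = (\<Sum>x\<in>UNIV. \<Sum>y\<in>UNIV. pmf \<pi> (x, y) * \<psi> x)"
    by (simp add: expectation_finite couplings_marginals(1)[OF \<pi>] sum_distrib_right)
  moreover have "measure_pmf.expectation \<mu> \<phi> = (\<Sum>x\<in>UNIV. \<Sum>y\<in>UNIV. pmf \<pi> (x, y) * \<phi> y)"
    by (simp add: expectation_finite couplings_marginals(2)[OF \<pi>] sum_distrib_right)
      (rule sum.swap)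
  ultimately have "measure_pmf.expectation \<mu> \<phi> + measure_pmf.expectation \<theta> \<psi>
      = (\<Sum>x\<in>UNIV. \<Sum>y\<in>UNIV. pmf \<pi> (x, y) * (\<psi> x + \<phi> y))"
    by (simp add: sum.distrib[symmetric] distrib_left add.commute)
  also have "\<dots> \<le> (\<Sum>x\<in>UNIV. \<Sum>y\<in>UNIV. pmf \<pi> (x, y) * dist x y powr p)"
    using c_transform_le[of p \<phi>] unfolding assms
    by (intro sum_mono mult_left_mono) (auto simp: algebra_simps)
  finally show "measure_pmf.expectation \<mu> \<phi> + measure_pmf.expectation \<theta> \<psi> \<le> transport_cost p \<pi>"
    by (simp add: transport_cost_finite)
qed

definition l1_dist :: "'a::finite pmf \<Rightarrow> 'a pmf \<Rightarrow> real" where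
  "l1_dist \<mu> \<nu> = (\<Sum>x\<in>UNIV. \<bar>pmf \<mu> x - pmf \<nu> x\<bar>)"

lemma l1_dist_triangle: "l1_dist \<alpha> \<gamma> \<le> l1_dist \<alpha> \<beta> + l1_dist \<beta> \<gamma>"
  unfolding l1_dist_def sum.distrib[symmetric] by (intro sum_mono) linarith

lemma l1_dist_le_transport_cost:
  fixes \<mu> \<nu> :: "'a::{metric_space,finite} pmf"
  assumes \<pi>: "\<pi> \<in> couplings \<mu> \<nu>" and "0 \<le> \<delta>"
    and \<delta>: "\<And>x y::'a. x \<noteq> y \<Longrightarrow> \<delta> \<le> dist x y powr p"
  shows "\<delta> * l1_dist \<mu> \<nu> \<le> 2 * transport_cost p \<pi>"
proof -
  define g where "g x y = (if x = y then 0 else pmf \<pi> (x, y))" for x y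
  have "\<bar>pmf \<mu> x - pmf \<nu> x\<bar> \<le> (\<Sum>y\<in>UNIV. g x y + g y x)" for x
  proof -
    have "\<bar>pmf \<pi> a - pmf \<pi> b\<bar> \<le> pmf \<pi> a + pmf \<pi> b" for a b
      using pmf_nonneg[of \<pi> a] pmf_nonneg[of \<pi> b] by (simp add: abs_le_iff)
    then have "\<bar>\<Sum>y\<in>UNIV. pmf \<pi> (x, y) - pmf \<pi> (y, x)\<bar> \<le> (\<Sum>y\<in>UNIV. g x y + g y x)"
      by (intro order_trans[OF sum_abs] sum_mono) (auto simp: g_def)
    then show ?thesis
      by (simp add: couplings_marginals[OF \<pi>] sum_subtractf)
  qed
  then have "l1_dist \<mu> \<nu> \<le> (\<Sum>x\<in>UNIV. \<Sum>y\<in>UNIV. g x y) + (\<Sum>x\<in>UNIV. \<Sum>y\<in>UNIV. g y x)"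
    unfolding l1_dist_def sum.distrib[symmetric] by (intro sum_mono)
  also have "\<dots> = 2 * (\<Sum>x\<in>UNIV. \<Sum>y\<in>UNIV. g x y)"
    using sum.swap[of "\<lambda>x y. g y x" UNIV UNIV] by simp
  finally have "\<delta> * l1_dist \<mu> \<nu> \<le> \<delta> * (2 * (\<Sum>x\<in>UNIV. \<Sum>y\<in>UNIV. g x y))"
    using \<open>0 \<le> \<delta>\<close> by (rule mult_left_mono)
  also have "\<dots> = 2 * (\<Sum>x\<in>UNIV. \<Sum>y\<in>UNIV. \<delta> * g x y)"
    by (simp add: sum_distrib_left mult.left_commute)
  also have "\<dots> \<le> 2 * (\<Sum>x\<in>UNIV. \<Sum>y\<in>UNIV. pmf \<pi> (x, y) * dist x y powr p)"
    using \<delta> by (intro mult_left_mono sum_mono)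
      (auto simp: g_def mult.commute[of \<delta>] intro: mult_left_mono)
  finally show ?thesis
    by (simp add: transport_cost_finite)
qed

lemma l1_dist_le_Wpp:
  fixes \<mu> \<nu> :: "'a::{metric_space,finite} pmf"
  assumes "0 \<le> \<delta>" and "\<And>x y::'a. x \<noteq> y \<Longrightarrow> \<delta> \<le> dist x y powr p"
  shows "\<delta> * l1_dist \<mu> \<nu> \<le> 2 * Wpp p \<mu> \<nu>"
proof -
  have "\<delta> * l1_dist \<mu> \<nu> / 2 \<le> Wpp p \<mu> \<nu>"
    using l1_dist_le_transport_cost[OF _ assms] by (intro le_WppI) fastforce
  then show ?thesis by simp
qed

lemma expectation_diff_le_l1_dist:
  fixes \<mu> \<nu> :: "'a::finite pmf"
  assumes osc: "\<And>x x'. f x \<le> f x' + D"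
  shows "\<bar>measure_pmf.expectation \<mu> f - measure_pmf.expectation \<nu> f\<bar> \<le> D * l1_dist \<mu> \<nu>"
proof -
  fix x\<^sub>0 :: 'a
  have "(\<Sum>x\<in>UNIV. pmf \<mu> x - pmf \<nu> x) = 0"
    by (simp add: sum_subtractf sum_pmf_eq_1)
  then have "measure_pmf.expectation \<mu> f - measure_pmf.expectation \<nu> f
      = (\<Sum>x\<in>UNIV. (pmf \<mu> x - pmf \<nu> x) * (f x - f x\<^sub>0))"
    by (simp add: expectation_finite right_diff_distrib left_diff_distrib sum_subtractf
        sum_distrib_right[symmetric])
  also have "\<bar>\<dots>\<bar> \<le> (\<Sum>x\<in>UNIV. \<bar>pmf \<mu> x - pmf \<nu> x\<bar> * D)"
  proof (rule order_trans[OF sum_abs], intro sum_mono)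
    fix x
    have "\<bar>f x - f x\<^sub>0\<bar> \<le> D" using osc[of x x\<^sub>0] osc[of x\<^sub>0 x] by linarith
    then show "\<bar>(pmf \<mu> x - pmf \<nu> x) * (f x - f x\<^sub>0)\<bar> \<le> \<bar>pmf \<mu> x - pmf \<nu> x\<bar> * D"
      by (simp add: abs_mult mult_left_mono)
  qed
  finally show ?thesis
    by (simp add: l1_dist_def sum_distrib_left mult.commute)
qed

lemma sub_coupling_with_column_sums:
  fixes \<gamma> :: "('a::finite \<times> 'b::finite) pmf"
  assumes \<gamma>: "\<gamma> \<in> couplings \<theta> \<nu>" and m: "\<And>z. 0 \<le> m z" "\<And>z. m z \<le> pmf \<nu> z"
  obtains \<kappa> where "\<And>x z. 0 \<le> \<kappa> x z" and "\<And>x z. \<kappa> x z \<le> pmf \<gamma> (x, z)"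
    and "\<And>z. (\<Sum>x\<in>UNIV. \<kappa> x z) = m z"
proof
  \<comment> \<open>Witness \<open>\<gamma>(x,z) m(z) / \<nu>(z)\<close>; where \<open>\<nu>(z) = 0\<close> also \<open>m(z) = 0\<close>, so \<open>x / 0 = 0\<close> is harmless.\<close>
  fix x z
  have "m z / pmf \<nu> z \<le> 1"
    using m[of z] by (cases "pmf \<nu> z = 0") auto
  then show "pmf \<gamma> (x, z) * (m z / pmf \<nu> z) \<le> pmf \<gamma> (x, z)"
    by (rule mult_left_le) simp
  show "0 \<le> pmf \<gamma> (x, z) * (m z / pmf \<nu> z)"
    using m[of z] by simp
next
  fix z
  have "(\<Sum>x\<in>UNIV. pmf \<gamma> (x, z) * (m z / pmf \<nu> z)) = pmf \<nu> z * (m z / pmf \<nu> z)"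
    by (simp only: sum_distrib_right[symmetric] couplings_marginals(2)[OF \<gamma>, symmetric])
  also have "\<dots> = m z"
    using m[of z] by (cases "pmf \<nu> z = 0") auto
  finally show "(\<Sum>x\<in>UNIV. pmf \<gamma> (x, z) * (m z / pmf \<nu> z)) = m z" .
qed

lemma product_plan_marginals:
  fixes f :: "'a::finite \<Rightarrow> real" and g :: "'b::finite \<Rightarrow> real"
  assumes f: "\<And>x. 0 \<le> f x" and g: "\<And>y. 0 \<le> g y" and sums: "sum f UNIV = sum g UNIV"
  shows "(\<Sum>y\<in>UNIV. f x * g y / sum g UNIV) = f x"
    and "(\<Sum>x\<in>UNIV. f x * g y / sum g UNIV) = g y"
proof -
  have "f x = 0" "g y = 0" if "sum g UNIV = 0"
    using that sums f g sum_nonneg_eq_0_iff[of UNIV f] sum_nonneg_eq_0_iff[of UNIV g] by auto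
  then show "(\<Sum>y\<in>UNIV. f x * g y / sum g UNIV) = f x"
    and "(\<Sum>x\<in>UNIV. f x * g y / sum g UNIV) = g y"
    by (auto simp: sums sum_divide_distrib[symmetric] sum_distrib_left[symmetric]
        sum_distrib_right[symmetric])
qed

lemma product_plan_cost_le:
  fixes f :: "'a::finite \<Rightarrow> real" and g :: "'b::finite \<Rightarrow> real"
  assumes f: "\<And>x. 0 \<le> f x" and g: "\<And>y. 0 \<le> g y" and sums: "sum f UNIV = sum g UNIV"
    and c: "\<And>x y. c x y \<le> D"
  shows "(\<Sum>x\<in>UNIV. \<Sum>y\<in>UNIV. f x * g y / sum g UNIV * c x y) \<le> D * sum g UNIV"
proof -
  have "(\<Sum>x\<in>UNIV. \<Sum>y\<in>UNIV. f x * g y / sum g UNIV * c x y)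
      \<le> (\<Sum>x\<in>UNIV. \<Sum>y\<in>UNIV. f x * g y / sum g UNIV * D)"
    using f g c by (intro sum_mono mult_left_mono) (auto simp: sum_nonneg)
  also have "\<dots> = sum f UNIV * D"
    by (simp only: sum_distrib_right[symmetric] product_plan_marginals(1)[OF f g sums])
  finally show ?thesis
    by (simp add: sums mult.commute)
qed

text \<open>Keep the part \<open>min \<mu> \<nu>\<close> of the coupling \<open>\<gamma>\<close> of \<open>\<theta>\<close> and \<open>\<nu>\<close>, and send the
remaining \<open>\<theta>\<close>-mass to the surplus \<open>\<mu> - min \<mu> \<nu>\<close> by a product plan; the latter moves
mass at most \<open>l1_dist \<mu> \<nu>\<close>, each unit at cost at most \<open>D\<close>.\<close>

lemma Wpp_le_transport_cost_plus_l1_dist: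
  fixes \<theta> \<mu> \<nu> :: "'a::{metric_space,finite} pmf"
  assumes \<gamma>: "\<gamma> \<in> couplings \<theta> \<nu>" and D: "\<And>x y::'a. dist x y powr p \<le> D"
  shows "Wpp p \<theta> \<mu> \<le> transport_cost p \<gamma> + D * l1_dist \<mu> \<nu>"
proof -
  define m where "m z = min (pmf \<mu> z) (pmf \<nu> z)" for z
  obtain \<kappa> where \<kappa>_nonneg: "\<And>x z. 0 \<le> \<kappa> x z" and \<kappa>_le: "\<And>x z. \<kappa> x z \<le> pmf \<gamma> (x, z)"
    and \<kappa>_col: "\<And>z. (\<Sum>x\<in>UNIV. \<kappa> x z) = m z"
    using sub_coupling_with_column_sums[OF \<gamma>, of m] by (auto simp: m_def)
  define r where "r x = pmf \<theta> x - (\<Sum>z\<in>UNIV. \<kappa> x z)" for x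
  define s where "s z = pmf \<mu> z - m z" for z
  have r_nonneg: "0 \<le> r x" for x
    using \<kappa>_le by (simp add: r_def couplings_marginals(1)[OF \<gamma>] sum_mono)
  have s_nonneg: "0 \<le> s z" for z
    by (simp add: s_def m_def)
  have "sum r UNIV = 1 - (\<Sum>z\<in>UNIV. \<Sum>x\<in>UNIV. \<kappa> x z)"
    by (simp add: r_def sum_subtractf sum_pmf_eq_1 sum.swap[of \<kappa>])
  then have sums: "sum r UNIV = sum s UNIV"
    by (simp add: s_def \<kappa>_col sum_subtractf sum_pmf_eq_1)
  define \<sigma> where "\<sigma> = (\<lambda>(x, z). \<kappa> x z + r x * s z / sum s UNIV)"
  have "Wpp p \<theta> \<mu> \<le> (\<Sum>x\<in>UNIV. \<Sum>z\<in>UNIV. \<sigma> (x, z) * dist x z powr p)"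
  proof (rule Wpp_le_plan)
    show "0 \<le> \<sigma> z" for z
      using \<kappa>_nonneg r_nonneg s_nonneg by (auto simp: \<sigma>_def sum_nonneg split: prod.splits)
    show "(\<Sum>z\<in>UNIV. \<sigma> (x, z)) = pmf \<theta> x" for x
      using product_plan_marginals(1)[OF r_nonneg s_nonneg sums, of x]
      by (simp add: \<sigma>_def sum.distrib r_def)
    show "(\<Sum>x\<in>UNIV. \<sigma> (x, z)) = pmf \<mu> z" for z
      using product_plan_marginals(2)[OF r_nonneg s_nonneg sums, of z]
      by (simp add: \<sigma>_def sum.distrib \<kappa>_col s_def)
  qed
  also have "\<dots> = (\<Sum>x\<in>UNIV. \<Sum>z\<in>UNIV. \<kappa> x z * dist x z powr p)
      + (\<Sum>x\<in>UNIV. \<Sum>z\<in>UNIV. r x * s z / sum s UNIV * dist x z powr p)"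
    by (simp add: \<sigma>_def distrib_right sum.distrib)
  also have "\<dots> \<le> transport_cost p \<gamma> + D * sum s UNIV"
  proof (rule add_mono)
    show "(\<Sum>x\<in>UNIV. \<Sum>z\<in>UNIV. \<kappa> x z * dist x z powr p) \<le> transport_cost p \<gamma>"
      unfolding transport_cost_finite using \<kappa>_le by (intro sum_mono mult_right_mono) auto
  qed (rule product_plan_cost_le[OF r_nonneg s_nonneg sums D])
  also have "\<dots> \<le> transport_cost p \<gamma> + D * l1_dist \<mu> \<nu>"
  proof -
    have "sum s UNIV \<le> l1_dist \<mu> \<nu>"
      unfolding l1_dist_def s_def m_def by (intro sum_mono) auto
    then show ?thesis
      using D[of undefined undefined] by (simp add: mult_left_mono)
  qed
  finally show ?thesis .
qed

lemma Wpp_le_Wpp_plus_l1_dist: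
  fixes \<theta> \<mu> \<nu> :: "'a::{metric_space,finite} pmf"
  assumes "\<And>x y::'a. dist x y powr p \<le> D"
  shows "Wpp p \<theta> \<mu> \<le> Wpp p \<theta> \<nu> + D * l1_dist \<mu> \<nu>"
proof (rule field_le_epsilon)
  fix \<eta> :: real assume "\<eta> > 0"
  then obtain \<gamma> where "\<gamma> \<in> couplings \<theta> \<nu>" and "transport_cost p \<gamma> < Wpp p \<theta> \<nu> + \<eta>"
    by (rule Wpp_near_optimal_coupling)
  with Wpp_le_transport_cost_plus_l1_dist[OF _ assms, of \<gamma> \<theta> \<nu> \<mu>]
  show "Wpp p \<theta> \<mu> \<le> Wpp p \<theta> \<nu> + D * l1_dist \<mu> \<nu> + \<eta>"
    by simp
qed

lemma Wpp_le_dual_plus_l1_dist: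
  fixes \<theta> \<mu> \<nu> :: "'a::{metric_space,finite} pmf"
  assumes D: "\<And>x y::'a. dist x y powr p \<le> D"
    and \<phi>: "\<phi> = c_transform p \<psi>"
    and opt: "Wpp p \<theta> \<nu> = measure_pmf.expectation \<nu> \<phi> + measure_pmf.expectation \<theta> \<psi>"
  shows "Wpp p \<theta> \<mu> \<le> measure_pmf.expectation \<mu> \<phi> + measure_pmf.expectation \<theta> \<psi> + 2 * D * l1_dist \<mu> \<nu>"
proof -
  have "\<bar>measure_pmf.expectation \<mu> \<phi> - measure_pmf.expectation \<nu> \<phi>\<bar> \<le> D * l1_dist \<mu> \<nu>"
    unfolding \<phi> by (intro expectation_diff_le_l1_dist c_transform_oscillation[OF D])
  then have "measure_pmf.expectation \<nu> \<phi> \<le> measure_pmf.expectation \<mu> \<phi> + D * l1_dist \<mu> \<nu>"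
    by linarith
  with Wpp_le_Wpp_plus_l1_dist[OF D, of \<theta> \<mu> \<nu>] show ?thesis
    by (simp add: opt)
qed

lemma finite_cost_bounded:
  obtains D where "\<And>x y::'a::{metric_space,finite}. dist x y powr p \<le> D"
proof
  show "dist x y powr p \<le> Max (range (\<lambda>(x, y::'a). dist x y powr p))" for x y :: 'a
    by (rule Max_ge) (auto intro: image_eqI[where x="(x, y)"])
qed

lemma finite_cost_separated:
  obtains \<delta> where "0 < \<delta>" and "\<And>x y::'a::{metric_space,finite}. x \<noteq> y \<Longrightarrow> \<delta> \<le> dist x y powr p"
proof
  define \<delta> where "\<delta> = Min (insert 1 ((\<lambda>(x, y::'a). dist x y powr p) ` {z. fst z \<noteq> snd z}))"
  show "0 < \<delta>"
    unfolding \<delta>_def by (subst Min_gr_iff) auto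
  show "\<delta> \<le> dist x y powr p" if "x \<noteq> y" for x y :: 'a
    unfolding \<delta>_def using that by (intro Min_le) auto
qed

lemma l1_dense_if_Wp_dense:
  fixes \<mu>s :: "nat \<Rightarrow> 'a::{metric_space,finite} pmf"
  assumes "0 < p" and dense: "\<And>\<nu> e. e > 0 \<Longrightarrow> \<exists>k. Wp p \<nu> (\<mu>s k) < e" and "0 < \<eta>"
  shows "\<exists>k. l1_dist \<nu> (\<mu>s k) < \<eta>"
proof -
  obtain \<delta> where "0 < \<delta>" and \<delta>: "\<And>x y::'a. x \<noteq> y \<Longrightarrow> \<delta> \<le> dist x y powr p"
    using finite_cost_separated[where p = p] by blast
  define t where "t = \<delta> * \<eta> / 2"
  have "0 < t" using \<open>0 < \<delta>\<close> \<open>0 < \<eta>\<close> by (simp add: t_def)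
  then obtain k where k: "Wpp p \<nu> (\<mu>s k) powr (1 / p) < t powr (1 / p)"
    using dense[of "t powr (1 / p)"] by (auto simp: Wp_def)
  have "Wpp p \<nu> (\<mu>s k) < t"
  proof (rule ccontr)
    assume "\<not> ?thesis"
    then have "t powr (1 / p) \<le> Wpp p \<nu> (\<mu>s k) powr (1 / p)"
      using \<open>0 < t\<close> \<open>0 < p\<close> by (intro powr_mono2) auto
    with k show False by simp
  qed
  with l1_dist_le_Wpp[OF _ \<delta>, of \<nu> "\<mu>s k"] \<open>0 < \<delta>\<close> have "\<delta> * l1_dist \<nu> (\<mu>s k) < \<delta> * \<eta>"
    unfolding t_def by linarith
  with \<open>0 < \<delta>\<close> show ?thesis by auto
qed

lemma finite_l1_net:
  assumes "0 < \<eta>"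
  obtains N :: "'a::finite pmf set" where "finite N" and "\<And>\<mu>. \<exists>\<nu>\<in>N. l1_dist \<mu> \<nu> < \<eta>"
proof -
  define V :: "'a pmf \<Rightarrow> real^'a" where "V \<mu> = (\<chi> x. pmf \<mu> x)" for \<mu>
  have l1_le: "l1_dist \<alpha> \<beta> \<le> CARD('a) * dist (V \<alpha>) (V \<beta>)" for \<alpha> \<beta>
  proof -
    have "l1_dist \<alpha> \<beta> \<le> (\<Sum>x\<in>(UNIV::'a set). dist (V \<alpha>) (V \<beta>))"
      unfolding l1_dist_def dist_norm
      using component_le_norm_cart[of "V \<alpha> - V \<beta>"] by (intro sum_mono) (simp add: V_def)
    then show ?thesis by simp
  qed
  define r where "r = \<eta> / CARD('a)"
  have "0 < r" using \<open>0 < \<eta>\<close> by (simp add: r_def)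
  have "range V \<subseteq> cbox 0 1"
    by (auto simp: V_def mem_box_cart pmf_le_1)
  then have compact: "compact (closure (range V))"
    using bounded_subset bounded_cbox compact_closure by blast
  have cover: "closure (range V) \<subseteq> (\<Union>\<nu>\<in>UNIV. ball (V \<nu>) r)"
  proof
    fix w assume "w \<in> closure (range V)"
    then obtain \<nu> where "dist (V \<nu>) w < r"
      using \<open>0 < r\<close> unfolding closure_approachable by fast
    then show "w \<in> (\<Union>\<nu>\<in>UNIV. ball (V \<nu>) r)" by auto
  qed
  obtain N where "N \<subseteq> UNIV" and "finite N" and N: "closure (range V) \<subseteq> (\<Union>\<nu>\<in>N. ball (V \<nu>) r)"
    by (rule compactE_image[OF compact _ cover]) simp
  have "\<exists>\<nu>\<in>N. l1_dist \<mu> \<nu> < \<eta>" for \<mu>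
  proof -
    have "V \<mu> \<in> closure (range V)"
      by (meson closure_subset rangeI subsetD)
    with N obtain \<nu> where "\<nu> \<in> N" and "V \<mu> \<in> ball (V \<nu>) r"
      by blast
    then have "CARD('a) * dist (V \<mu>) (V \<nu>) < \<eta>"
      by (simp add: r_def dist_commute field_simps)
    with l1_le[of \<mu> \<nu>] \<open>\<nu> \<in> N\<close> show ?thesis
      by (meson le_less_trans)
  qed
  with \<open>finite N\<close> show thesis by (rule that)
qed

lemma finite_l1_net_of_sequence:
  fixes \<mu>s :: "nat \<Rightarrow> 'a::finite pmf"
  assumes dense: "\<And>\<nu> \<eta>. 0 < \<eta> \<Longrightarrow> \<exists>k. l1_dist \<nu> (\<mu>s k) < \<eta>" and "0 < \<eta>"
  obtains I where "finite I" and "I \<noteq> {}" and "\<And>\<mu>. \<exists>k\<in>I. l1_dist \<mu> (\<mu>s k) < \<eta>"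
proof -
  obtain N :: "'a pmf set" where "finite N" and N: "\<And>\<mu>. \<exists>\<nu>\<in>N. l1_dist \<mu> \<nu> < \<eta> / 2"
    using finite_l1_net[of "\<eta> / 2"] \<open>0 < \<eta>\<close> by auto
  have "\<forall>\<nu>. \<exists>k. l1_dist \<nu> (\<mu>s k) < \<eta> / 2"
    using dense \<open>0 < \<eta>\<close> half_gt_zero by blast
  then obtain k where k: "\<And>\<nu>. l1_dist \<nu> (\<mu>s (k \<nu>)) < \<eta> / 2"
    by metis
  have "\<exists>i\<in>k ` N. l1_dist \<mu> (\<mu>s i) < \<eta>" for \<mu>
  proof -
    obtain \<nu> where "\<nu> \<in> N" and "l1_dist \<mu> \<nu> < \<eta> / 2" using N by blast
    then have "l1_dist \<mu> (\<mu>s (k \<nu>)) < \<eta>"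
      using k[of \<nu>] l1_dist_triangle[of \<mu> "\<mu>s (k \<nu>)" \<nu>] by linarith
    with \<open>\<nu> \<in> N\<close> show ?thesis by blast
  qed
  moreover from this have "k ` N \<noteq> {}" by blast
  ultimately show thesis
    using \<open>finite N\<close> that by blast
qed

theorem theoremB6:
  fixes p :: real
    and \<theta> :: "'a::{metric_space,finite} pmf"
    and \<mu>s :: "nat \<Rightarrow> 'a pmf"
    and \<phi> \<psi> :: "nat \<Rightarrow> 'a \<Rightarrow> real"
    and \<epsilon> :: real
  assumes p: "1 < p"
    and dense: "\<And>\<nu> e. e > 0 \<Longrightarrow> \<exists>k. Wp p \<nu> (\<mu>s k) < e"
    and psi: "\<And>k. \<psi> k = c_transform p (\<phi> k)"
    and phi: "\<And>k. \<phi> k = c_transform p (\<psi> k)"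
    and opt: "\<And>k. Wpp p \<theta> (\<mu>s k) =
       measure_pmf.expectation (\<mu>s k) (\<phi> k) + measure_pmf.expectation \<theta> (\<psi> k)"
    and eps: "\<epsilon> > 0"
  shows "\<exists>I. finite I \<and> I \<noteq> {} \<and>
    (\<forall>\<mu>. \<bar>Wpp p \<theta> \<mu> -
        Max ((\<lambda>k. measure_pmf.expectation \<mu> (\<phi> k) + measure_pmf.expectation \<theta> (\<psi> k)) ` I)\<bar> \<le> \<epsilon>)"
proof -
  define G where "G k \<mu> = measure_pmf.expectation \<mu> (\<phi> k) + measure_pmf.expectation \<theta> (\<psi> k)"
    for k \<mu>
  obtain D where D: "\<And>x y::'a. dist x y powr p \<le> D"
    using finite_cost_bounded[where p = p] by blast
  have "0 \<le> D"
    using D[of undefined undefined] by simp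
  have "0 < p"
    using p by simp
  define \<eta> where "\<eta> = \<epsilon> / (2 * D + 1)"
  have "0 < \<eta>" and "2 * D * \<eta> \<le> \<epsilon>"
    using eps \<open>0 \<le> D\<close> by (simp_all add: \<eta>_def field_simps)
  obtain I where "finite I" and "I \<noteq> {}" and close: "\<And>\<mu>. \<exists>k\<in>I. l1_dist \<mu> (\<mu>s k) < \<eta>"
    using finite_l1_net_of_sequence[OF l1_dense_if_Wp_dense[OF \<open>0 < p\<close> dense] \<open>0 < \<eta>\<close>] by blast
  have "\<bar>Wpp p \<theta> \<mu> - Max ((\<lambda>k. G k \<mu>) ` I)\<bar> \<le> \<epsilon>" for \<mu>
  proof -
    obtain k where "k \<in> I" and "l1_dist \<mu> (\<mu>s k) < \<eta>" using close by blast
    then have "2 * D * l1_dist \<mu> (\<mu>s k) \<le> 2 * D * \<eta>"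
      using \<open>0 \<le> D\<close> by (intro mult_left_mono) auto
    moreover have "Wpp p \<theta> \<mu> \<le> G k \<mu> + 2 * D * l1_dist \<mu> (\<mu>s k)"
      unfolding G_def by (rule Wpp_le_dual_plus_l1_dist[OF D phi opt])
    moreover have "G k \<mu> \<le> Max ((\<lambda>k. G k \<mu>) ` I)"
      using \<open>finite I\<close> \<open>k \<in> I\<close> by (intro Max_ge) auto
    moreover have "Max ((\<lambda>k. G k \<mu>) ` I) \<le> Wpp p \<theta> \<mu>"
      using \<open>finite I\<close> \<open>I \<noteq> {}\<close> dual_le_Wpp[OF psi] by (intro Max.boundedI) (auto simp: G_def)
    ultimately show ?thesis
      using \<open>2 * D * \<eta> \<le> \<epsilon>\<close> by linarith
  qed
  with \<open>finite I\<close> \<open>I \<noteq> {}\<close> show ?thesis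
    unfolding G_def by blast
qed

end
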